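(* Let $h\in\mathbf N$ and let $s$ be a right-infinite word over $\{x,y\}$ such that the frontier $f={}^ts\;y\,x^h\,y\;s$ is admissible. Embed $f$ in the plane and let $t$ be the $SL_2$-tiling with values in $\mathbf N$ extending it. Let $I$ be the lattice point of the embedded path lying between the factor $x^h$ and the following letter $y$ of the middle factor $yx^hy$, and let $J=I+(0,-1)$, $K=I+(0,-2)$. Put $i_n=t(I+n(1,0))$, $j_n=t(J+n(1,-1))$, $k_n=t(K+n(1,-1))$. Then for all $n\in\mathbf N$, $$j_n=(h+1)\,i_n^2\qquad\text{and}\qquad k_n+1=(h+1)\,i_n\,i_{n+1}.$$
   Context: Cartesian coordinates on $\mathbf Z^2$. The transpose ${}^tw$ of a (finite or infinite) word $w$ over $\{x,y\}$ is obtained by reversing $w$ and exchanging $x$ and $y$; the transpose of a right-infinite word is left-infinite. A frontier is a bi-infinite word over $\{x,y\}$, admissible if neither $(x_n)_{n\ge0}$ nor $(x_n)_{n\le0}$ is ultimately constant; it is embedded as lattice points $P_i$ with $P_i-P_{i-1}=(1,0)$ if $x_i=x$ and $(0,1)$ if $x_i=y$. An $SL_2$-tiling extending it is $t:\mathbf Z^2\to\mathbf N$ with $t(a,b+1)t(a+1,b)-t(a,b)t(a+1,b+1)=1$ for all $(a,b)$ and $t(P_i)=1$ for all $i$ (it exists and is unique). *)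

theory Defs
  imports Main "HOL-Library.Product_Plus"
begin

datatype letter = X | Y

fun swap_letter :: "letter \<Rightarrow> letter" where
  "swap_letter X = Y" | "swap_letter Y = X"

text \<open>A right-infinite word is a map nat => letter (position 0 is the first letter);
  a bi-infinite word (frontier) is a map int => letter.\<close>

definition ultimately_constant :: "(nat \<Rightarrow> 'a) \<Rightarrow> bool" where
  "ultimately_constant u \<longleftrightarrow> (\<exists>N c. \<forall>n\<ge>N. u n = c)"

definition admissible :: "(int \<Rightarrow> letter) \<Rightarrow> bool" where
  "admissible f \<longleftrightarrow> \<not> ultimately_constant (\<lambda>n. f (int n))
                   \<and> \<not> ultimately_constant (\<lambda>n. f (- int n))"

text \<open>The middle factor y x^h y occupies
  positions 1, ..., h+2; the transpose of s occupies positions <= 0 (position -m carries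
  the exchanged letter s m); s occupies positions >= h+3 (position h+3+m carries s m).\<close>
definition frontier_word :: "nat \<Rightarrow> (nat \<Rightarrow> letter) \<Rightarrow> int \<Rightarrow> letter" where
  "frontier_word h s i =
     (if i \<le> 0 then swap_letter (s (nat (- i)))
      else if i = 1 then Y
      else if i \<le> int h + 1 then X
      else if i = int h + 2 then Y
      else s (nat (i - int h - 3)))"

definition step :: "letter \<Rightarrow> int \<times> int" where
  "step l = (if l = X then (1, 0) else (0, 1))"

text \<open>P embeds the frontier f in the plane: P i - P (i-1) is (1,0) if the i-th letter is x,
  and (0,1) if it is y.  (The lattice point between letters i and i+1 is P i.)\<close>
definition embedding :: "(int \<Rightarrow> letter) \<Rightarrow> (int \<Rightarrow> int \<times> int) \<Rightarrow> bool" where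
  "embedding f P \<longleftrightarrow> (\<forall>i. P i = P (i - 1) + step (f i))"

definition sl2_tiling :: "(int \<times> int \<Rightarrow> nat) \<Rightarrow> bool" where
  "sl2_tiling t \<longleftrightarrow> (\<forall>a b. int (t (a, b + 1)) * int (t (a + 1, b))
                              - int (t (a, b)) * int (t (a + 1, b + 1)) = 1)"

definition extends_frontier :: "(int \<times> int \<Rightarrow> nat) \<Rightarrow> (int \<Rightarrow> int \<times> int) \<Rightarrow> bool" where
  "extends_frontier t P \<longleftrightarrow> (\<forall>i. t (P i) = 1)"

end

theory Submission
  imports Defs Complex_Main
begin

(*
  Shift coordinates so that u a b = t(I + (a, b)).  An SL2-tiling with
  nonzero entries has rank two: consecutive columns satisfy a frieze relation
  u(a) + u(a+2) = nu * u(a+1), hence every row is a combination of the rows b = 0 and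
  b = -1, i.e.  u a b = X(a) . Y(b)  with
  X(a) = (u a 0, u a (-1)) and coordinate vectors Y(b) = (y1 b, y2 b); consecutive X's and
  consecutive Y's have determinant 1.  Along a frontier edge between two entries 1 this
  forces X (for a horizontal edge) or Y (for a vertical edge) to change by a perpendicular
  of the other vector.
  Walking simultaneously to the right along  y x^h y s  and to the left along  transpose s,
  the two walkers take mirrored steps, and an induction on the length of the walk shows
  that Y at the left walker's row is a fixed linear image of X at the right walker's column
  (and vice versa).  Because s contains infinitely many x's, the right walker visits every
  column n >= 0; this computes Y(-1-n) and Y(-2-n), and the rank-two formula gives the two
  identities of the theorem.
*)

lemma unit_dot_neighbour:
  fixes x1 x2 x1' x2' y1 y2 :: int
  assumes dot: "x1 * y1 + x2 * y2 = 1" and dot': "x1' * y1 + x2' * y2 = 1"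
    and det: "x1 * x2' - x2 * x1' = 1"
  shows "x1' = x1 - y2 \<and> x2' = x2 + y1"
proof -
  define d1 d2 where "d1 = x1' - x1" and "d2 = x2' - x2"
  have orth: "d1 * y1 + d2 * y2 = 0" using dot dot' by (simp add: d1_def d2_def algebra_simps)
  have unit: "x1 * d2 - x2 * d1 = 1" using det by (simp add: d1_def d2_def algebra_simps)
  have "d2 = y1 * (x1 * d2 - x2 * d1) + x2 * (d1 * y1 + d2 * y2)"
    using dot by algebra
  moreover have "d1 = x1 * (d1 * y1 + d2 * y2) - y2 * (x1 * d2 - x2 * d1)"
    using dot by algebra
  ultimately show ?thesis using orth unit by (simp add: d1_def d2_def)
qed

definition expands_in :: "(int \<Rightarrow> int) \<Rightarrow> (int \<Rightarrow> int) \<Rightarrow> (int \<Rightarrow> int) \<Rightarrow> bool" where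
  "expands_in p q r \<longleftrightarrow> (\<forall>b. r b = r 0 * p b + r (-1) * q b)"

lemma expands_in_recurrence:
  fixes \<nu> :: real
  assumes r0: "expands_in p q r0" and r1: "expands_in p q r1"
    and rec: "\<forall>b. real_of_int (r2 b) = \<nu> * real_of_int (r1 b) - real_of_int (r0 b)"
  shows "expands_in p q r2"
  unfolding expands_in_def
proof
  fix b
  have "real_of_int (r2 b) = \<nu> * (r1 0 * p b + r1 (-1) * q b) - (r0 0 * p b + r0 (-1) * q b)"
    using rec r0 r1 unfolding expands_in_def by (metis of_int_add of_int_mult)
  also have "\<dots> = (\<nu> * r1 0 - r0 0) * p b + (\<nu> * r1 (-1) - r0 (-1)) * q b"
    by (simp add: algebra_simps)
  also have "\<dots> = real_of_int (r2 0 * p b + r2 (-1) * q b)"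
    using rec by simp
  finally show "r2 b = r2 0 * p b + r2 (-1) * q b"
    by (simp only: of_int_eq_iff)
qed

locale nonzero_sl2_array =
  fixes u :: "int \<Rightarrow> int \<Rightarrow> int"
  assumes unimodular: "u a (b + 1) * u (a + 1) b - u a b * u (a + 1) (b + 1) = 1"
    and nonzero: "u a b \<noteq> 0"
begin

text \<open>Frieze relation: the sum of the columns a and a + 2 is proportional to column a + 1,
  because the ratio (u a b + u (a+2) b) / u (a+1) b does not depend on b.\<close>
lemma frieze_relation:
  "\<exists>\<nu>. \<forall>b. real_of_int (u a b + u (a + 2) b) = \<nu> * real_of_int (u (a + 1) b)"
proof -
  define r where "r b = real_of_int (u a b + u (a + 2) b) / real_of_int (u (a + 1) b)" for b
  have nonzero: "real_of_int (u c b) \<noteq> 0" for c b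
    using nonzero[of c b] by simp
  have r_step: "r (b + 1) = r b" for b
  proof -
    have "u (a + 1) (b + 1) * u (a + 2) b - u (a + 1) b * u (a + 2) (b + 1) = 1"
      using unimodular[of "a + 1" b] by (simp add: add.assoc)
    then have "(u a (b + 1) + u (a + 2) (b + 1)) * u (a + 1) b
             = (u a b + u (a + 2) b) * u (a + 1) (b + 1)"
      using unimodular[of a b] by (simp add: algebra_simps)
    then have "real_of_int (u a (b + 1) + u (a + 2) (b + 1)) * real_of_int (u (a + 1) b)
             = real_of_int (u a b + u (a + 2) b) * real_of_int (u (a + 1) (b + 1))"
      by (metis of_int_mult)
    then show ?thesis
      unfolding r_def by (rule frac_eq_eq[THEN iffD2, OF nonzero nonzero])
  qed
  have "r b = r 0" for b
  proof (induction b rule: int_induct[where k = 0])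
    case (step1 i)
    then show ?case using r_step[of i] by simp
  next
    case (step2 i)
    then show ?case using r_step[of "i - 1"] by simp
  qed simp
  then show ?thesis
    using nonzero unfolding r_def by (metis nonzero_eq_divide_eq)
qed

text \<open>Row b is expected to be y1 b times row 0 plus y2 b times row -1; the coefficients are
  given by Cramer's rule in the 2x2 block of columns 0, 1 and rows -1, 0.\<close>
definition y1 :: "int \<Rightarrow> int" where
  "y1 b = u 1 (-1) * u 0 b - u 0 (-1) * u 1 b"

definition y2 :: "int \<Rightarrow> int" where
  "y2 b = u 0 0 * u 1 b - u 1 0 * u 0 b"

lemma column_unimodular: "u a 0 * u (a + 1) (-1) - u a (-1) * u (a + 1) 0 = 1"
  using unimodular[of a "-1"] by simp

lemma y_at_0: "y1 0 = 1" "y2 0 = 0"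
  using column_unimodular[of 0] by (simp_all add: y1_def y2_def mult.commute)

lemma y_at_minus_1: "y1 (-1) = 0" "y2 (-1) = 1"
  using column_unimodular[of 0] by (simp_all add: y1_def y2_def mult.commute)

text \<open>Rank two: u a b is the scalar product of X(a) and Y(b) = (y1 b, y2 b).  By the frieze
  relation this propagates from the columns 0 and 1 to all columns, in both directions.\<close>
lemma rank_two: "u a b = u a 0 * y1 b + u a (-1) * y2 b"
proof -
  have "expands_in y1 y2 (u a) \<and> expands_in y1 y2 (u (a + 1))" for a
  proof (induction a rule: int_induct[where k = 0])
    case base
    have "u c 0 * y1 b + u c (-1) * y2 b = u c b * (u 0 0 * u 1 (-1) - u 0 (-1) * u 1 0)"
      if "c = 0 \<or> c = 1" for c b
      using that by (auto simp add: y1_def y2_def algebra_simps)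
    then show ?case
      using column_unimodular[of 0] by (simp add: expands_in_def)
  next
    case (step1 i)
    obtain \<nu> where "\<forall>b. real_of_int (u i b + u (i + 2) b) = \<nu> * real_of_int (u (i + 1) b)"
      using frieze_relation by blast
    then have "\<forall>b. real_of_int (u (i + 1 + 1) b) = \<nu> * u (i + 1) b - u i b"
      by (simp add: algebra_simps)
    then show ?case
      using step1(2) by (blast intro: expands_in_recurrence)
  next
    case (step2 i)
    obtain \<nu> where "\<forall>b. real_of_int (u (i - 1) b + u (i - 1 + 2) b) = \<nu> * real_of_int (u (i - 1 + 1) b)"
      using frieze_relation by blast
    then have "\<forall>b. real_of_int (u (i - 1) b) = \<nu> * u i b - u (i + 1) b"
      by (simp add: algebra_simps)
    then have "expands_in y1 y2 (u (i - 1))"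
      using step2(2) by (blast intro: expands_in_recurrence)
    then show ?case
      using step2(2) by simp
  qed
  then show ?thesis
    unfolding expands_in_def by blast
qed

lemma row_unimodular: "y1 (b + 1) * y2 b - y2 (b + 1) * y1 b = 1"
proof -
  have "u 0 (b + 1) * u 1 b - u 0 b * u 1 (b + 1)
      = (u 0 0 * y1 (b + 1) + u 0 (-1) * y2 (b + 1)) * (u 1 0 * y1 b + u 1 (-1) * y2 b)
        - (u 0 0 * y1 b + u 0 (-1) * y2 b) * (u 1 0 * y1 (b + 1) + u 1 (-1) * y2 (b + 1))"
    by (simp only: rank_two[symmetric])
  also have "\<dots> = (u 0 0 * u 1 (-1) - u 0 (-1) * u 1 0) * (y1 (b + 1) * y2 b - y2 (b + 1) * y1 b)"
    by algebra
  finally show ?thesis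
    using column_unimodular[of 0] unimodular[of 0 b] by simp
qed

lemma horizontal_step:
  assumes "u a b = 1" "u (a + 1) b = 1"
  shows "u (a + 1) 0 = u a 0 - y2 b \<and> u (a + 1) (-1) = u a (-1) + y1 b"
  using unit_dot_neighbour[OF rank_two[of a b, unfolded assms(1), symmetric]
      rank_two[of "a + 1" b, unfolded assms(2), symmetric] column_unimodular] .

lemma vertical_step:
  assumes "u a b = 1" "u a (b + 1) = 1"
  shows "y1 (b + 1) = y1 b + u a (-1) \<and> y2 (b + 1) = y2 b - u a 0"
proof -
  have dot: "y1 b * u a 0 + y2 b * u a (-1) = 1" and dot': "y1 (b + 1) * u a 0 + y2 (b + 1) * u a (-1) = 1"
    using rank_two[of a b] rank_two[of a "b + 1"] assms by (simp_all add: mult.commute)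
  have "y1 b = y1 (b + 1) - u a (-1) \<and> y2 b = y2 (b + 1) + u a 0"
    using unit_dot_neighbour[OF dot' dot row_unimodular] .
  then show ?thesis by simp
qed

end

lemma unit_steps_reach_every_value:
  fixes p :: "nat \<Rightarrow> int"
  assumes start: "p 0 = 0" and steps: "\<And>m. p (Suc m) = p m \<or> p (Suc m) = p m + 1"
    and rises: "\<And>m. \<exists>k\<ge>m. p (Suc k) = p k + 1"
  shows "\<exists>m. p m = int n"
proof -
  have mono: "p m \<le> p m'" if "m \<le> m'" for m m'
  proof (rule lift_Suc_mono_le[of p, OF _ that])
    show "p k \<le> p (Suc k)" for k
      using steps[of k] by auto
  qed
  have unbounded: "\<exists>m. int n \<le> p m" for n
  proof (induction n)
    case 0
    show ?case using start by (metis order.refl of_nat_0)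
  next
    case (Suc n)
    then obtain m where "int n \<le> p m" by blast
    moreover obtain k where "m \<le> k" "p (Suc k) = p k + 1" using rises by blast
    ultimately have "int (Suc n) \<le> p (Suc k)" using mono[of m k] by simp
    then show ?case by blast
  qed
  obtain m where "int n \<le> p m" using unbounded by blast
  moreover have "\<bar>p (i + 1) - p i\<bar> \<le> 1" for i
    using steps[of i] by auto
  ultimately show ?thesis
    using nat0_intermed_int_val[of m p "int n"] start by auto
qed

lemma admissible_infinitely_many_X:
  assumes "admissible (frontier_word h s)"
  shows "\<exists>k\<ge>m. s k = X"
proof (rule ccontr)
  assume "\<not> (\<exists>k\<ge>m. s k = X)"
  then have "s k = Y" if "k \<ge> m" for k
    using that letter.exhaust by blast
  then have "frontier_word h s (int n) = Y" if "n \<ge> m + h + 3" for n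
    using that by (simp add: frontier_word_def nat_diff_distrib)
  then have "ultimately_constant (\<lambda>n. frontier_word h s (int n))"
    unfolding ultimately_constant_def by blast
  then show False
    using assms unfolding admissible_def by blast
qed

text \<open>The setting of the theorem; admissibility is only used through the fact that s
  contains infinitely many x's.\<close>
locale tiled_frontier =
  fixes h :: nat and s :: "nat \<Rightarrow> letter"
    and P :: "int \<Rightarrow> int \<times> int" and t :: "int \<times> int \<Rightarrow> nat"
  assumes emb: "embedding (frontier_word h s) P"
    and til: "sl2_tiling t"
    and pos: "\<forall>p. t p > 0"
    and ext: "extends_frontier t P"
    and infinitely_many_X: "\<exists>k\<ge>m. s k = X"
begin

definition origin :: "int \<times> int" where
  "origin = P (int h + 1)"

definition u :: "int \<Rightarrow> int \<Rightarrow> int" where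
  "u a b = int (t (origin + (a, b)))"

lemma origin_shift: "origin + (a, b) = (fst origin + a, snd origin + b)"
  by (simp add: prod_eq_iff)

sublocale nonzero_sl2_array u
proof
  fix a b
  show "u a (b + 1) * u (a + 1) b - u a b * u (a + 1) (b + 1) = 1"
    using til[unfolded sl2_tiling_def, rule_format, of "fst origin + a" "snd origin + b"]
    by (simp add: u_def origin_shift add.assoc)
  show "u a b \<noteq> 0"
    using pos[rule_format, of "origin + (a, b)"] by (simp add: u_def)
qed

lemma on_frontier:
  assumes "P i = origin + (a, b)"
  shows "u a b = 1"
  using ext assms unfolding extends_frontier_def u_def by (metis of_nat_1)

lemma path_step: "P (i + 1) = P i + step (frontier_word h s (i + 1))"
  using emb unfolding embedding_def by (metis add_diff_cancel_right')

lemma step_X: "step X = (1, 0)" and step_Y: "step Y = (0, 1)"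
  by (simp_all add: step_def)

lemma middle_row: "k \<le> h \<Longrightarrow> P (int h + 1 - int k) = origin + (- int k, 0)"
proof (induction k)
  case 0
  then show ?case by (simp add: origin_def zero_prod_def)
next
  case (Suc k)
  have "frontier_word h s (int h + 1 - int k) = X"
    using Suc.prems by (simp add: frontier_word_def)
  then have "P (int h + 1 - int k) = P (int h + 1 - int (Suc k)) + (1, 0)"
    using path_step[of "int h - int k"] by (simp add: step_X algebra_simps)
  then show ?case
    using Suc by (simp add: prod_eq_iff)
qed

lemma before_middle: "P 0 = origin + (- int h, -1)"
proof -
  have "P 1 = P 0 + (0, 1)"
    using path_step[of 0] by (simp add: frontier_word_def step_Y)
  then show ?thesis
    using middle_row[of h] by (simp add: prod_eq_iff)
qed

lemma after_middle: "P (int h + 2) = origin + (0, 1)"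
  using path_step[of "int h + 1"] by (simp add: frontier_word_def step_Y origin_def add.assoc)

lemma middle_values:
  "k \<le> h \<Longrightarrow> u (- int k) 0 = 1" "u (- int h) (-1) = 1" "u 0 1 = 1"
  using middle_row before_middle after_middle by (auto intro: on_frontier)

text \<open>Walking along the segment x^h, X grows by the perpendicular of Y(0) = (1, 0) at each
  step, so u 0 (-1) = h + 1.\<close>
lemma column_below_origin: "u 0 (-1) = int h + 1"
proof -
  have "u (- int h + int d) (-1) = 1 + int d" if "d \<le> h" for d
    using that
  proof (induction d)
    case 0
    then show ?case using middle_values(2) by simp
  next
    case (Suc d)
    have "u (- int h + int d) 0 = 1" "u (- int h + int d + 1) 0 = 1"
      using middle_values(1)[of "h - d"] middle_values(1)[of "h - Suc d"] Suc.prems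
      by (simp_all add: of_nat_diff algebra_simps)
    then have "u (- int h + int d + 1) (-1) = u (- int h + int d) (-1) + 1"
      using horizontal_step y_at_0 by simp
    then show ?case
      using Suc by (simp add: algebra_simps)
  qed
  then show ?thesis
    using order.refl by fastforce
qed

lemma y_at_1: "y1 1 = int h + 2" "y2 1 = -1"
  using vertical_step[of 0 0] middle_values(1)[of 0] middle_values(3) y_at_0 column_below_origin
  by simp_all

definition ra :: "nat \<Rightarrow> int" where "ra m = fst (P (int h + 2 + int m) - origin)"
definition rb :: "nat \<Rightarrow> int" where "rb m = snd (P (int h + 2 + int m) - origin)"
definition la :: "nat \<Rightarrow> int" where "la m = fst (P (- int m) - origin)"
definition lb :: "nat \<Rightarrow> int" where "lb m = snd (P (- int m) - origin)"

lemma walkers_on_frontier: "u (ra m) (rb m) = 1" "u (la m) (lb m) = 1"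
  by (rule on_frontier, simp add: ra_def rb_def la_def lb_def prod_eq_iff)+

lemma walkers_start: "ra 0 = 0" "rb 0 = 1" "la 0 = - int h" "lb 0 = -1"
  using after_middle before_middle by (simp_all add: ra_def rb_def la_def lb_def)

lemma walkers_move:
  "P (int h + 2 + int (Suc m)) = P (int h + 2 + int m) + step (s m)"
  "P (- int m) = P (- int (Suc m)) + step (swap_letter (s m))"
  using path_step[of "int h + 2 + int m"] path_step[of "- int (Suc m)"]
  by (simp_all add: frontier_word_def add.assoc)

lemma walkers_move_X:
  assumes "s m = X"
  shows "ra (Suc m) = ra m + 1" "rb (Suc m) = rb m" "la (Suc m) = la m" "lb (Suc m) = lb m - 1"
  using walkers_move[of m] assms by (simp_all add: ra_def rb_def la_def lb_def step_X step_Y)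

lemma walkers_move_Y:
  assumes "s m = Y"
  shows "ra (Suc m) = ra m" "rb (Suc m) = rb m + 1" "la (Suc m) = la m - 1" "lb (Suc m) = lb m"
  using walkers_move[of m] assms by (simp_all add: ra_def rb_def la_def lb_def step_X step_Y)

definition mirror_invariant :: "nat \<Rightarrow> bool" where
  "mirror_invariant m \<longleftrightarrow> lb m = -1 - ra m
     \<and> y1 (lb m) = (int h + 1) * u (ra m) 0 - u (ra m) (-1) \<and> y2 (lb m) = u (ra m) 0
     \<and> u (la m) 0 = - y2 (rb m) \<and> u (la m) (-1) = y1 (rb m) + (int h + 1) * y2 (rb m)"

lemma mirror_invariant_start: "mirror_invariant 0"
  using walkers_start middle_values(1)[of 0] middle_values(1)[of h] middle_values(2)
    y_at_minus_1 y_at_1 column_below_origin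
  by (simp add: mirror_invariant_def)

text \<open>On a letter x, the right walker crosses a horizontal edge and the left walker the mirrored
  vertical edge; the invariant is preserved.  The case of a letter y is symmetric.\<close>
lemma mirror_invariant_step_X:
  assumes inv: "mirror_invariant m" and X: "s m = X"
  shows "mirror_invariant (Suc m)"
proof -
  note move = walkers_move_X[OF X]
  from inv have i_lb: "lb m = -1 - ra m"
    and i_y1: "y1 (lb m) = (int h + 1) * u (ra m) 0 - u (ra m) (-1)"
    and i_y2: "y2 (lb m) = u (ra m) 0"
    and i_x0: "u (la m) 0 = - y2 (rb m)"
    and i_x1: "u (la m) (-1) = y1 (rb m) + (int h + 1) * y2 (rb m)"
    unfolding mirror_invariant_def by blast+
  have right: "u (ra m + 1) 0 = u (ra m) 0 - y2 (rb m)" "u (ra m + 1) (-1) = u (ra m) (-1) + y1 (rb m)"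
    using horizontal_step walkers_on_frontier(1)[of m] walkers_on_frontier(1)[of "Suc m"] move
    by simp_all
  have left: "y1 (lb m - 1) = y1 (lb m) - u (la m) (-1)" "y2 (lb m - 1) = y2 (lb m) + u (la m) 0"
    using vertical_step[of "la m" "lb m - 1"] walkers_on_frontier(2)[of m]
      walkers_on_frontier(2)[of "Suc m"] move
    by simp_all
  have "y1 (lb m - 1) = ((int h + 1) * u (ra m) 0 - u (ra m) (-1))
                         - (y1 (rb m) + (int h + 1) * y2 (rb m))"
    by (simp only: left(1) i_y1 i_x1)
  also have "\<dots> = (int h + 1) * (u (ra m) 0 - y2 (rb m)) - (u (ra m) (-1) + y1 (rb m))"
    by (simp add: algebra_simps)
  finally have y1_next: "y1 (lb m - 1) = (int h + 1) * u (ra m + 1) 0 - u (ra m + 1) (-1)"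
    by (simp only: right)
  have y2_next: "y2 (lb m - 1) = u (ra m + 1) 0"
    by (simp only: left(2) right(1) i_y2 i_x0)
  show ?thesis
    unfolding mirror_invariant_def move
    using y1_next y2_next i_x0 i_x1 by (intro conjI) (assumption | simp add: i_lb)+
qed

lemma mirror_invariant_step_Y:
  assumes inv: "mirror_invariant m" and Y: "s m = Y"
  shows "mirror_invariant (Suc m)"
proof -
  note move = walkers_move_Y[OF Y]
  from inv have i_lb: "lb m = -1 - ra m"
    and i_y1: "y1 (lb m) = (int h + 1) * u (ra m) 0 - u (ra m) (-1)"
    and i_y2: "y2 (lb m) = u (ra m) 0"
    and i_x0: "u (la m) 0 = - y2 (rb m)"
    and i_x1: "u (la m) (-1) = y1 (rb m) + (int h + 1) * y2 (rb m)"
    unfolding mirror_invariant_def by blast+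
  have right: "y1 (rb m + 1) = y1 (rb m) + u (ra m) (-1)" "y2 (rb m + 1) = y2 (rb m) - u (ra m) 0"
    using vertical_step walkers_on_frontier(1)[of m] walkers_on_frontier(1)[of "Suc m"] move
    by simp_all
  have left: "u (la m - 1) 0 = u (la m) 0 + y2 (lb m)" "u (la m - 1) (-1) = u (la m) (-1) - y1 (lb m)"
    using horizontal_step[of "la m - 1" "lb m"] walkers_on_frontier(2)[of m]
      walkers_on_frontier(2)[of "Suc m"] move
    by simp_all
  have "u (la m - 1) (-1) = (y1 (rb m) + (int h + 1) * y2 (rb m))
                             - ((int h + 1) * u (ra m) 0 - u (ra m) (-1))"
    by (simp only: left(2) i_y1 i_x1)
  also have "\<dots> = (y1 (rb m) + u (ra m) (-1)) + (int h + 1) * (y2 (rb m) - u (ra m) 0)"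
    by (simp add: algebra_simps)
  finally have x1_next: "u (la m - 1) (-1) = y1 (rb m + 1) + (int h + 1) * y2 (rb m + 1)"
    by (simp only: right)
  have x0_next: "u (la m - 1) 0 = - y2 (rb m + 1)"
    by (simp only: left(1) right(2) i_y2 i_x0)
  show ?thesis
    unfolding mirror_invariant_def move
    using x0_next x1_next i_lb i_y1 i_y2 by (intro conjI) assumption+
qed

lemma mirror_invariant: "mirror_invariant m"
proof (induction m)
  case 0
  show ?case by (rule mirror_invariant_start)
next
  case (Suc m)
  then show ?case
    using mirror_invariant_step_X mirror_invariant_step_Y by (cases "s m") auto
qed

lemma right_walker_reaches: "\<exists>m. ra m = int n"
proof (rule unit_steps_reach_every_value)
  show "ra 0 = 0" by (rule walkers_start)
  show "ra (Suc m) = ra m \<or> ra (Suc m) = ra m + 1" for m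
    using walkers_move_X walkers_move_Y by (cases "s m") auto
  show "\<exists>k\<ge>m. ra (Suc k) = ra k + 1" for m
    using infinitely_many_X walkers_move_X by blast
qed

lemma antidiagonal_coordinates:
  "y1 (-1 - int n) = (int h + 1) * u n 0 - u n (-1)" "y2 (-1 - int n) = u n 0"
proof -
  obtain m where "ra m = int n"
    using right_walker_reaches by blast
  then show "y1 (-1 - int n) = (int h + 1) * u n 0 - u n (-1)" "y2 (-1 - int n) = u n 0"
    using mirror_invariant[of m] unfolding mirror_invariant_def by auto
qed

lemma diagonal_identities:
  "u n (-1 - int n) = (int h + 1) * u n 0 ^ 2"
  "u n (-2 - int n) + 1 = (int h + 1) * u n 0 * u (int n + 1) 0"
proof -
  show "u n (-1 - int n) = (int h + 1) * u n 0 ^ 2"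
    using rank_two[of n "-1 - int n"] antidiagonal_coordinates[of n]
    by (simp add: algebra_simps power2_eq_square)
  have next_coordinates: "y1 (-2 - int n) = (int h + 1) * u (int n + 1) 0 - u (int n + 1) (-1)"
    "y2 (-2 - int n) = u (int n + 1) 0"
    using antidiagonal_coordinates[of "Suc n"]
    unfolding of_nat_Suc add.commute[of 1 "int n"] by (simp_all add: diff_diff_eq)
  have "u n (-2 - int n) = u n 0 * y1 (-2 - int n) + u n (-1) * y2 (-2 - int n)"
    by (rule rank_two)
  also have "\<dots> = (int h + 1) * u n 0 * u (int n + 1) 0
                  - (u n 0 * u (int n + 1) (-1) - u n (-1) * u (int n + 1) 0)"
    unfolding next_coordinates by (simp add: algebra_simps)
  finally show "u n (-2 - int n) + 1 = (int h + 1) * u n 0 * u (int n + 1) 0"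
    using column_unimodular[of n] by simp
qed

lemma tiling_identities:
  "t (origin + (0, -1) + (int n, - int n)) = (h + 1) * t (origin + (int n, 0)) ^ 2"
  "t (origin + (0, -2) + (int n, - int n)) + 1
     = (h + 1) * t (origin + (int n, 0)) * t (origin + (int (n + 1), 0))"
proof -
  have j_point: "origin + (0, -1) + (int n, - int n) = origin + (int n, -1 - int n)"
    and k_point: "origin + (0, -2) + (int n, - int n) = origin + (int n, -2 - int n)"
    by (simp_all add: prod_eq_iff)
  have "int (t (origin + (0, -1) + (int n, - int n))) = u n (-1 - int n)"
    unfolding j_point u_def ..
  also have "\<dots> = (int h + 1) * u n 0 ^ 2"
    by (rule diagonal_identities)
  also have "\<dots> = int ((h + 1) * t (origin + (int n, 0)) ^ 2)"
    by (simp add: u_def algebra_simps)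
  finally show "t (origin + (0, -1) + (int n, - int n)) = (h + 1) * t (origin + (int n, 0)) ^ 2"
    by (simp only: of_nat_eq_iff)
  have "int (t (origin + (0, -2) + (int n, - int n)) + 1) = u n (-2 - int n) + 1"
    unfolding k_point u_def by simp
  also have "\<dots> = (int h + 1) * u n 0 * u (int n + 1) 0"
    by (rule diagonal_identities)
  also have "\<dots> = int ((h + 1) * t (origin + (int n, 0)) * t (origin + (int (n + 1), 0)))"
    by (simp add: u_def algebra_simps)
  finally show "t (origin + (0, -2) + (int n, - int n)) + 1
                = (h + 1) * t (origin + (int n, 0)) * t (origin + (int (n + 1), 0))"
    by (simp only: of_nat_eq_iff)
qed

end

theorem lemma2:
  fixes h :: nat and s :: "nat \<Rightarrow> letter"
    and P :: "int \<Rightarrow> int \<times> int" and t :: "int \<times> int \<Rightarrow> nat"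
  assumes adm: "admissible (frontier_word h s)"
    and emb: "embedding (frontier_word h s) P"
    and til: "sl2_tiling t"
    and pos: "\<forall>p. t p > 0"
    and ext: "extends_frontier t P"
  shows "\<forall>n::nat.
           (let I = P (int h + 1); J = I + (0, -1); K = I + (0, -2);
                i = (\<lambda>m::nat. t (I + (int m, 0)));
                j = (\<lambda>m::nat. t (J + (int m, - int m)));
                k = (\<lambda>m::nat. t (K + (int m, - int m)))
            in j n = (h + 1) * (i n)^2 \<and> k n + 1 = (h + 1) * i n * i (n + 1))"
proof -
  interpret tiled_frontier h s P t
    using emb til pos ext admissible_infinitely_many_X[OF adm] by unfold_locales
  show ?thesis
    unfolding Let_def origin_def[symmetric] using tiling_identities by blast
qed

end
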